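(* Let $G=K_{n_1}\times\cdots\times K_{n_d}$, where each $n_j\geq 2$ is even. Then for every vertex $u$ of $G$, $\uparrow^{2}G$ has Laplacian perfect state transfer between $(0,u)$ and $(1,u)$.
   Context: All graphs are simple, undirected and unweighted. $K_n$ is the complete graph on $n$ vertices. The direct product $G\times H$ is the graph with adjacency matrix $A(G)\otimes A(H)$. The blow-up $\uparrow^{2}G$ has vertex set $\mathbb{Z}_2\times V(G)$, with $(l,u)\sim(m,v)$ iff $u\sim v$ in $G$. A graph with Laplacian $L=D-A$ has Laplacian perfect state transfer between $a,b$ if $\exp(i\tau L)\mathbf{e}_a=\gamma\mathbf{e}_b$ for some $\tau>0$, $\gamma\in\mathbb{C}$. *)

theory Defs
  imports Complex_Main
begin

text \<open>A finite graph is given by a vertex set V and a symmetric adjacency relation adj.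
Matrices indexed by V are functions V \<Rightarrow> V \<Rightarrow> complex.\<close>

definition laplacian :: "'v set \<Rightarrow> ('v \<Rightarrow> 'v \<Rightarrow> bool) \<Rightarrow> 'v \<Rightarrow> 'v \<Rightarrow> complex" where
  "laplacian V adj u v =
     (if u = v then of_nat (card {w\<in>V. adj u w}) else 0) - (if adj u v then 1 else 0)"

definition mat_vec :: "'v set \<Rightarrow> ('v \<Rightarrow> 'v \<Rightarrow> complex) \<Rightarrow> ('v \<Rightarrow> complex) \<Rightarrow> ('v \<Rightarrow> complex)" where
  "mat_vec V M x = (\<lambda>u. \<Sum>v\<in>V. M u v * x v)"

definition unit_vec :: "'v \<Rightarrow> 'v \<Rightarrow> complex" where
  "unit_vec a = (\<lambda>v. if v = a then 1 else 0)"

text \<open>Laplacian perfect state transfer: exp(i tau L) e_a = gamma e_b, where the matrix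
exponential applied to e_a is given entrywise by its defining power series.\<close>
definition laplacian_pst :: "'v set \<Rightarrow> ('v \<Rightarrow> 'v \<Rightarrow> bool) \<Rightarrow> 'v \<Rightarrow> 'v \<Rightarrow> bool" where
  "laplacian_pst V adj a b \<longleftrightarrow>
     (\<exists>\<tau>::real. \<tau> > 0 \<and> (\<exists>\<gamma>::complex. \<forall>w\<in>V.
        (\<lambda>k. (\<i> * complex_of_real \<tau>) ^ k / fact k
              * ((mat_vec V (laplacian V adj)) ^^ k) (unit_vec a) w)
        sums (\<gamma> * unit_vec b w)))"

text \<open>Direct product K_{n_1} x ... x K_{n_d}: vertices are tuples (lists) x with
x!j < n_j; adjacency is entrywise adjacency in each complete graph.\<close>
definition prodK_verts :: "nat list \<Rightarrow> nat list set" where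
  "prodK_verts ns = {xs. length xs = length ns \<and> (\<forall>j<length ns. xs ! j < ns ! j)}"

definition prodK_adj :: "nat list \<Rightarrow> nat list \<Rightarrow> nat list \<Rightarrow> bool" where
  "prodK_adj ns xs ys \<longleftrightarrow> (\<forall>j<length ns. xs ! j \<noteq> ys ! j)"

definition blowup2_verts :: "'v set \<Rightarrow> (nat \<times> 'v) set" where
  "blowup2_verts V = {0, 1} \<times> V"

definition blowup2_adj :: "('v \<Rightarrow> 'v \<Rightarrow> bool) \<Rightarrow> nat \<times> 'v \<Rightarrow> nat \<times> 'v \<Rightarrow> bool" where
  "blowup2_adj adj p q \<longleftrightarrow> adj (snd p) (snd q)"

end

theory Submission
  imports Defs "HOL-Analysis.Analysis"
begin

(* The Laplacian of the blow-up of a d-regular graph G is 2d I - J_2 (x) A(G).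
   Write e_(0,u) as the sum of the symmetric part (e_0 + e_1) (x) e_u / 2 and the antisymmetric
   part (e_0 - e_1) (x) e_u / 2. The antisymmetric part is an eigenvector for 2d; expanding e_u in
   eigenvectors of A(G) with eigenvalues lambda, the symmetric part splits into eigenvectors for
   2d - 2 lambda. At time pi/2 these acquire the phases exp(i pi d) and exp(i pi d) exp(-i pi lambda),
   so if every such lambda is an odd integer the symmetric part flips sign relative to the
   antisymmetric one, and e_(0,u) is sent to a multiple of e_(1,u).
   For a direct product of complete graphs, e_u is a sum of tensor products of eigenvectors of the
   factors K_n, whose eigenvalues are -1 and n - 1; all their products are odd when every n is even. *)

definition adjacency :: "('v \<Rightarrow> 'v \<Rightarrow> bool) \<Rightarrow> 'v \<Rightarrow> 'v \<Rightarrow> complex" where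
  "adjacency adj u v = (if adj u v then 1 else 0)"

lemma exp_half_pi_shift_odd:
  fixes m :: int
  assumes "odd m"
  shows "exp (\<i> * of_real (pi / 2) * (z - 2 * of_int m)) = - exp (\<i> * of_real (pi / 2) * z)"
proof -
  obtain q where "m = 2 * q + 1"
    using assms oddE by blast
  then have exp_odd: "exp (\<i> * of_real pi * of_int m) = -1"
    using exp_integer_2pi_plus1[of "of_int q"] by (simp add: mult_ac)
  have "exp (\<i> * of_real (pi / 2) * (z - 2 * of_int m))
      = exp (\<i> * of_real (pi / 2) * z - \<i> * of_real pi * of_int m)"
    by (rule arg_cong[where f = exp]) (simp add: field_simps)
  also have "\<dots> = - exp (\<i> * of_real (pi / 2) * z)"
    unfolding exp_diff exp_odd by simp
  finally show ?thesis .
qed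

lemma mat_vec_funpow_eigen_sum:
  assumes eigen: "\<And>i w. i \<in> I \<Longrightarrow> w \<in> V \<Longrightarrow> mat_vec V M (\<psi> i) w = \<mu> i * \<psi> i w"
    and x: "\<And>w. w \<in> V \<Longrightarrow> x w = (\<Sum>i\<in>I. \<psi> i w)"
    and "w \<in> V"
  shows "(mat_vec V M ^^ k) x w = (\<Sum>i\<in>I. \<mu> i ^ k * \<psi> i w)"
  using \<open>w \<in> V\<close>
proof (induction k arbitrary: w)
  case 0
  then show ?case by (simp add: x)
next
  case (Suc k)
  have "(mat_vec V M ^^ Suc k) x w = (\<Sum>v\<in>V. M w v * (mat_vec V M ^^ k) x v)"
    by (simp add: mat_vec_def)
  also have "\<dots> = (\<Sum>v\<in>V. M w v * (\<Sum>i\<in>I. \<mu> i ^ k * \<psi> i v))"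
    using Suc.IH by simp
  also have "\<dots> = (\<Sum>i\<in>I. \<mu> i ^ k * mat_vec V M (\<psi> i) w)"
    by (simp add: mat_vec_def sum_distrib_left sum.swap[of _ I] mult_ac)
  also have "\<dots> = (\<Sum>i\<in>I. \<mu> i ^ Suc k * \<psi> i w)"
    using eigen Suc.prems by (simp add: mult_ac)
  finally show ?case .
qed

lemma exp_series_eigen_sum:
  assumes "finite I"
    and "\<And>i w. i \<in> I \<Longrightarrow> w \<in> V \<Longrightarrow> mat_vec V M (\<psi> i) w = \<mu> i * \<psi> i w"
    and "\<And>w. w \<in> V \<Longrightarrow> x w = (\<Sum>i\<in>I. \<psi> i w)"
    and "w \<in> V"
  shows "(\<lambda>k. c ^ k / fact k * (mat_vec V M ^^ k) x w) sums (\<Sum>i\<in>I. exp (c * \<mu> i) * \<psi> i w)"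
proof -
  have exp_sums: "(\<lambda>k. z ^ k / fact k) sums exp z" for z :: complex
    using exp_converges[of z] by (simp add: scaleR_conv_of_real divide_inverse mult.commute)
  have "(\<lambda>k. c ^ k / fact k * (mat_vec V M ^^ k) x w) = (\<lambda>k. \<Sum>i\<in>I. (c * \<mu> i) ^ k / fact k * \<psi> i w)"
    using mat_vec_funpow_eigen_sum[OF assms(2-4)]
    by (simp add: sum_distrib_left power_mult_distrib mult_ac)
  also have "\<dots> sums (\<Sum>i\<in>I. exp (c * \<mu> i) * \<psi> i w)"
    using \<open>finite I\<close> by (intro sums_sum sums_mult2 exp_sums)
  finally show ?thesis .
qed

lemma mat_vec_laplacian_blowup2:
  assumes "finite V"
    and regular: "\<And>v. v \<in> V \<Longrightarrow> card {w\<in>V. adj v w} = d"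
    and "v \<in> V" "l \<in> {0, 1}"
  shows "mat_vec (blowup2_verts V) (laplacian (blowup2_verts V) (blowup2_adj adj)) x (l, v)
       = 2 * of_nat d * x (l, v) - mat_vec V (adjacency adj) (\<lambda>y. x (0, y) + x (1, y)) v"
proof -
  let ?B = "blowup2_verts V"
  have "{w \<in> ?B. adj v (snd w)} = {0, 1} \<times> {y\<in>V. adj v y}"
    by (auto simp: blowup2_verts_def)
  then have degree: "card {w \<in> ?B. adj v (snd w)} = 2 * d"
    using regular[OF \<open>v \<in> V\<close>] by (simp add: card_cartesian_product)
  have "mat_vec ?B (laplacian ?B (blowup2_adj adj)) x (l, v)
      = (\<Sum>w\<in>?B. if w = (l, v) then 2 * of_nat d * x w else 0)
        - (\<Sum>w\<in>?B. adjacency adj v (snd w) * x w)"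
    unfolding mat_vec_def sum_subtractf[symmetric]
    by (intro sum.cong refl)
       (auto simp: laplacian_def degree adjacency_def blowup2_adj_def left_diff_distrib)
  also have "(\<Sum>w\<in>?B. if w = (l, v) then 2 * of_nat d * x w else 0) = 2 * of_nat d * x (l, v)"
    using assms by (simp add: blowup2_verts_def)
  also have "(\<Sum>w\<in>?B. adjacency adj v (snd w) * x w) = mat_vec V (adjacency adj) (\<lambda>y. x (0, y) + x (1, y)) v"
    unfolding blowup2_verts_def sum.cartesian_product'
    by (simp add: mat_vec_def sum.distrib distrib_left)
  finally show ?thesis .
qed

lemma mat_vec_laplacian_blowup2_lift:
  assumes "finite V"
    and regular: "\<And>v. v \<in> V \<Longrightarrow> card {w\<in>V. adj v w} = d"
    and eigen: "\<And>v. v \<in> V \<Longrightarrow> mat_vec V (adjacency adj) \<phi> v = \<theta> * \<phi> v"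
    and "s \<in> {0, 1}" "w \<in> blowup2_verts V"
  shows "mat_vec (blowup2_verts V) (laplacian (blowup2_verts V) (blowup2_adj adj)) (\<lambda>(l, v). (-1) ^ (s * l) * \<phi> v) w
       = (2 * of_nat d - (if s = 0 then 2 * \<theta> else 0)) * (\<lambda>(l, v). (-1) ^ (s * l) * \<phi> v) w"
proof -
  obtain l v where w: "w = (l, v)" "l \<in> {0, 1}" "v \<in> V"
    using \<open>w \<in> blowup2_verts V\<close> by (auto simp: blowup2_verts_def)
  have "mat_vec V (adjacency adj) (\<lambda>y. \<phi> y + (-1) ^ s * \<phi> y) v
      = (if s = 0 then 2 else 0) * mat_vec V (adjacency adj) \<phi> v"
    using \<open>s \<in> {0, 1}\<close> by (auto simp: mat_vec_def sum_distrib_left mult_ac)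
  then show ?thesis
    using w eigen[OF w(3)]
    by (auto simp: mat_vec_laplacian_blowup2[OF \<open>finite V\<close> regular w(3,2)] algebra_simps)
qed

lemma blowup2_laplacian_pst_odd_eigenvalues:
  fixes \<phi> :: "'i \<Rightarrow> 'v \<Rightarrow> complex" and m :: "'i \<Rightarrow> int"
  assumes "finite V" "finite I"
    and regular: "\<And>v. v \<in> V \<Longrightarrow> card {w\<in>V. adj v w} = d"
    and eigen: "\<And>i v. i \<in> I \<Longrightarrow> v \<in> V \<Longrightarrow> mat_vec V (adjacency adj) (\<phi> i) v = of_int (m i) * \<phi> i v"
    and odd: "\<And>i. i \<in> I \<Longrightarrow> odd (m i)"
    and decomp: "\<And>v. v \<in> V \<Longrightarrow> (\<Sum>i\<in>I. \<phi> i v) = unit_vec u v"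
  shows "laplacian_pst (blowup2_verts V) (blowup2_adj adj) (0, u) (1, u)"
proof -
  let ?B = "blowup2_verts V"
  let ?L = "laplacian ?B (blowup2_adj adj)"
  let ?J = "{0::nat, 1} \<times> I"
  define c where "c = \<i> * complex_of_real (pi / 2)"
  define E where "E = exp (c * (2 * of_nat d))"
  \<comment> \<open>\<open>\<psi> (0, i)\<close> and \<open>\<psi> (1, i)\<close> are the symmetric and antisymmetric lifts of \<open>\<phi> i / 2\<close>.\<close>
  define \<psi> where "\<psi> = (\<lambda>(s, i) (l, v). (-1) ^ (s * l) * (\<phi> i v / 2) :: complex)"
  define \<mu> where "\<mu> = (\<lambda>(s::nat, i). 2 * of_nat d - (if s = 0 then 2 * of_int (m i) else 0) :: complex)"
  have eigen_blowup: "mat_vec ?B ?L (\<psi> j) w = \<mu> j * \<psi> j w" if "j \<in> ?J" "w \<in> ?B" for j w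
  proof -
    obtain s i where j: "j = (s, i)" "s \<in> {0, 1}" "i \<in> I"
      using \<open>j \<in> ?J\<close> by auto
    have "mat_vec V (adjacency adj) (\<lambda>v. \<phi> i v / 2) v = of_int (m i) * (\<phi> i v / 2)" if "v \<in> V" for v
      using eigen[OF j(3) that] by (simp add: mat_vec_def sum_divide_distrib[symmetric])
    from mat_vec_laplacian_blowup2_lift[OF \<open>finite V\<close> regular this j(2) \<open>w \<in> ?B\<close>]
    show ?thesis
      using j(1) by (simp add: \<psi>_def \<mu>_def)
  qed
  have sum_J: "(\<Sum>(s, i)\<in>?J. f s * \<phi> i v) = (f 0 + f 1) * unit_vec u v" if "v \<in> V" for f :: "nat \<Rightarrow> complex" and v
    using decomp[OF that] by (simp add: sum.cartesian_product[symmetric] sum_distrib_left[symmetric] distrib_right)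
  have decomp_blowup: "unit_vec (0, u) w = (\<Sum>j\<in>?J. \<psi> j w)" if wB: "w \<in> ?B" for w
  proof -
    obtain l v where w: "w = (l, v)" "l \<in> {0, 1}" "v \<in> V"
      using wB by (auto simp: blowup2_verts_def)
    have "(\<Sum>j\<in>?J. \<psi> j w) = (\<Sum>(s, i)\<in>?J. (-1) ^ (s * l) / 2 * \<phi> i v)"
      unfolding w(1) \<psi>_def by (intro sum.cong) auto
    also have "\<dots> = ((-1) ^ (0 * l) / 2 + (-1) ^ (1 * l) / 2) * unit_vec u v"
      using sum_J[OF w(3), of "\<lambda>s. (-1) ^ (s * l) / 2"] by simp
    finally show ?thesis
      using w by (auto simp: unit_vec_def)
  qed
  have exp_eigenvalue: "exp (c * \<mu> (s, i)) = (if s = 0 then -E else E)" if "i \<in> I" for s i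
    using exp_half_pi_shift_odd[OF odd[OF that], of "2 * of_nat d"]
    by (simp add: c_def \<mu>_def E_def mult_ac)
  have "(\<lambda>k. c ^ k / fact k * (mat_vec ?B ?L ^^ k) (unit_vec (0, u)) w) sums (- E * unit_vec (1, u) w)"
    if wB: "w \<in> ?B" for w
  proof -
    obtain l v where w: "w = (l, v)" "l \<in> {0, 1}" "v \<in> V"
      using wB by (auto simp: blowup2_verts_def)
    have "(\<lambda>k. c ^ k / fact k * (mat_vec ?B ?L ^^ k) (unit_vec (0, u)) w)
        sums (\<Sum>j\<in>?J. exp (c * \<mu> j) * \<psi> j w)"
      using \<open>finite I\<close> by (intro exp_series_eigen_sum eigen_blowup decomp_blowup wB) auto
    also have "(\<Sum>j\<in>?J. exp (c * \<mu> j) * \<psi> j w)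
        = (\<Sum>(s, i)\<in>?J. (if s = 0 then -E else E) * (-1) ^ (s * l) / 2 * \<phi> i v)"
      unfolding w(1) \<psi>_def by (intro sum.cong) (auto simp: exp_eigenvalue)
    also have "\<dots> = (- E / 2 + E * (-1) ^ l / 2) * unit_vec u v"
      using sum_J[OF w(3), of "\<lambda>s. (if s = 0 then -E else E) * (-1) ^ (s * l) / 2"] by simp
    also have "\<dots> = - E * unit_vec (1, u) w"
      using w by (auto simp: unit_vec_def)
    finally show ?thesis .
  qed
  then show ?thesis
    unfolding laplacian_pst_def c_def by (intro exI[of _ "pi / 2"] conjI exI[of _ "- E"] ballI) auto
qed

lemma prodK_verts_Cons:
  "prodK_verts (n # ns) = (\<lambda>(a, ys). a # ys) ` ({..<n} \<times> prodK_verts ns)"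
proof (rule set_eqI)
  fix xs
  show "xs \<in> prodK_verts (n # ns) \<longleftrightarrow> xs \<in> (\<lambda>(a, ys). a # ys) ` ({..<n} \<times> prodK_verts ns)"
    by (cases xs) (auto simp: prodK_verts_def nth_Cons split: nat.splits)
qed

lemma finite_prodK_verts: "finite (prodK_verts ns)"
  by (induction ns) (auto simp: prodK_verts_Cons, simp add: prodK_verts_def)

lemma sum_prodK_verts_prod:
  fixes f :: "nat \<Rightarrow> nat \<Rightarrow> 'a :: comm_semiring_1"
  shows "(\<Sum>y\<in>prodK_verts ns. \<Prod>j<length ns. f j (y ! j)) = (\<Prod>j<length ns. \<Sum>a<ns ! j. f j a)"
proof (induction ns arbitrary: f)
  case Nil
  have "prodK_verts [] = {[]}" by (auto simp: prodK_verts_def)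
  then show ?case by simp
next
  case (Cons n ns)
  have "inj_on (\<lambda>(a, ys). a # ys) ({..<n} \<times> prodK_verts ns)"
    by (auto simp: inj_on_def)
  then have "(\<Sum>y\<in>prodK_verts (n # ns). \<Prod>j<length (n # ns). f j (y ! j))
     = (\<Sum>(a, ys)\<in>{..<n} \<times> prodK_verts ns. f 0 a * (\<Prod>j<length ns. f (Suc j) (ys ! j)))"
    unfolding prodK_verts_Cons
    by (simp add: sum.reindex case_prod_unfold prod.lessThan_Suc_shift del: prod.lessThan_Suc)
  also have "\<dots> = (\<Sum>a<n. f 0 a * (\<Sum>ys\<in>prodK_verts ns. \<Prod>j<length ns. f (Suc j) (ys ! j)))"
    by (simp add: sum.cartesian_product[symmetric] sum_distrib_left)
  also have "\<dots> = (\<Sum>a<n. f 0 a) * (\<Prod>j<length ns. \<Sum>a<ns ! j. f (Suc j) a)"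
    using Cons.IH[of "\<lambda>j. f (Suc j)"] by (simp add: sum_distrib_right)
  also have "\<dots> = (\<Prod>j<length (n # ns). \<Sum>a<(n # ns) ! j. f j a)"
    by (simp add: prod.lessThan_Suc_shift del: prod.lessThan_Suc)
  finally show ?case .
qed

lemma mat_vec_complete_graph:
  fixes a n :: nat
  assumes "a < n"
  shows "mat_vec {..<n} (adjacency (\<noteq>)) g a = sum g {..<n} - g a"
proof -
  have "mat_vec {..<n} (adjacency (\<noteq>)) g a = (\<Sum>b\<in>{..<n} - {a}. adjacency (\<noteq>) a b * g b)"
    unfolding mat_vec_def using assms by (subst sum.remove[of _ a]) (auto simp: adjacency_def)
  also have "\<dots> = (\<Sum>b\<in>{..<n} - {a}. g b)"
    by (intro sum.cong) (auto simp: adjacency_def)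
  also have "\<dots> = sum g {..<n} - g a"
    using assms by (simp add: sum_diff1)
  finally show ?thesis .
qed

lemma mat_vec_prodK_tensor:
  "mat_vec (prodK_verts ns) (adjacency (prodK_adj ns)) (\<lambda>y. \<Prod>j<length ns. g j (y ! j)) v
     = (\<Prod>j<length ns. mat_vec {..<ns ! j} (adjacency (\<noteq>)) (g j) (v ! j))"
proof -
  have "adjacency (prodK_adj ns) v y = (\<Prod>j<length ns. adjacency (\<noteq>) (v ! j) (y ! j))" for y
    by (auto simp: adjacency_def prodK_adj_def)
  then show ?thesis
    using sum_prodK_verts_prod[of "\<lambda>j a. adjacency (\<noteq>) (v ! j) a * g j a"]
    by (simp add: mat_vec_def prod.distrib)
qed

lemma card_prodK_neighbours:
  assumes "\<forall>n\<in>set ns. 0 < n" "v \<in> prodK_verts ns"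
  shows "card {y\<in>prodK_verts ns. prodK_adj ns v y} = (\<Prod>j<length ns. ns ! j - 1)"
proof -
  have "of_nat (card {y\<in>prodK_verts ns. prodK_adj ns v y})
      = mat_vec (prodK_verts ns) (adjacency (prodK_adj ns)) (\<lambda>y. \<Prod>j<length ns. 1) v"
    using finite_prodK_verts[of ns] by (simp add: mat_vec_def adjacency_def sum.If_cases Int_def)
  also have "\<dots> = (\<Prod>j<length ns. of_nat (ns ! j) - 1)"
    unfolding mat_vec_prodK_tensor[of ns "\<lambda>_ _. 1"] using assms
    by (intro prod.cong refl) (auto simp: mat_vec_complete_graph prodK_verts_def)
  also have "\<dots> = of_nat (\<Prod>j<length ns. ns ! j - 1)"
    using assms by (simp add: Suc_leI)
  finally show ?thesis
    by (simp only: of_nat_eq_iff)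
qed

(* The factor for j \<in> S has zero sum, so it is an eigenvector of K_(ns!j) for -1; the factor
   for j \<notin> S is constant, an eigenvector for ns!j - 1. *)

definition prodK_eigvec :: "nat list \<Rightarrow> nat list \<Rightarrow> nat set \<Rightarrow> nat list \<Rightarrow> complex" where
  "prodK_eigvec ns u S v =
     (\<Prod>j<length ns. if j \<in> S then unit_vec (u ! j) (v ! j) - 1 / of_nat (ns ! j) else 1 / of_nat (ns ! j))"

definition prodK_eigval :: "nat list \<Rightarrow> nat set \<Rightarrow> int" where
  "prodK_eigval ns S = (\<Prod>j<length ns. if j \<in> S then -1 else int (ns ! j) - 1)"

lemma prodK_eigvec_eigen:
  assumes "\<forall>n\<in>set ns. 0 < n" "u \<in> prodK_verts ns" "v \<in> prodK_verts ns"
  shows "mat_vec (prodK_verts ns) (adjacency (prodK_adj ns)) (prodK_eigvec ns u S) v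
       = of_int (prodK_eigval ns S) * prodK_eigvec ns u S v"
proof -
  define g where "g j a = (if j \<in> S then unit_vec (u ! j) a - 1 / of_nat (ns ! j) else 1 / of_nat (ns ! j))"
    for j a
  have "mat_vec {..<ns ! j} (adjacency (\<noteq>)) (g j) (v ! j)
      = (if j \<in> S then -1 else of_nat (ns ! j) - 1) * g j (v ! j)" if "j < length ns" for j
  proof -
    have "u ! j < ns ! j" "v ! j < ns ! j" "ns ! j \<noteq> 0"
      using assms that by (auto simp: prodK_verts_def)
    then have "sum (g j) {..<ns ! j} = (if j \<in> S then 0 else 1)"
      by (simp add: g_def unit_vec_def sum_subtractf)
    then show ?thesis
      using \<open>v ! j < ns ! j\<close> \<open>ns ! j \<noteq> 0\<close>
      by (simp add: mat_vec_complete_graph g_def field_simps)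
  qed
  moreover have "prodK_eigvec ns u S = (\<lambda>y. \<Prod>j<length ns. g j (y ! j))"
    by (simp add: fun_eq_iff prodK_eigvec_def g_def)
  moreover have "of_int (prodK_eigval ns S) = (\<Prod>j<length ns. if j \<in> S then -1 else of_nat (ns ! j) - 1 :: complex)"
    unfolding prodK_eigval_def of_int_prod by (intro prod.cong) auto
  ultimately show ?thesis
    by (simp add: mat_vec_prodK_tensor prod.distrib[symmetric])
qed

lemma sum_prodK_eigvec:
  assumes "u \<in> prodK_verts ns" "v \<in> prodK_verts ns"
  shows "(\<Sum>S\<in>Pow {..<length ns}. prodK_eigvec ns u S v) = unit_vec u v"
proof -
  let ?e = "\<lambda>j. unit_vec (u ! j) (v ! j) - 1 / of_nat (ns ! j) :: complex"
  let ?c = "\<lambda>j. 1 / of_nat (ns ! j) :: complex"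
  have "prodK_eigvec ns u S v = (\<Prod>j\<in>S. ?e j) * (\<Prod>j\<in>{..<length ns} - S. ?c j)"
    if "S \<subseteq> {..<length ns}" for S
    unfolding prodK_eigvec_def prod.If_cases[OF finite_lessThan]
    using that by (simp add: Int_absorb1 Diff_eq)
  then have "(\<Sum>S\<in>Pow {..<length ns}. prodK_eigvec ns u S v)
      = (\<Sum>S\<in>Pow {..<length ns}. (\<Prod>j\<in>S. ?e j) * (\<Prod>j\<in>{..<length ns} - S. ?c j))"
    by (intro sum.cong) auto
  also have "\<dots> = (\<Prod>j<length ns. ?e j + ?c j)"
    by (rule prod_add[symmetric]) simp
  also have "\<dots> = unit_vec u v"
    using assms by (auto simp: unit_vec_def prodK_verts_def list_eq_iff_nth_eq)
  finally show ?thesis .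
qed

lemma odd_prodK_eigval:
  assumes "\<forall>n\<in>set ns. even n"
  shows "odd (prodK_eigval ns S)"
  using assms by (auto simp: prodK_eigval_def even_prod_iff)

theorem corollary7:
  fixes ns :: "nat list" and u :: "nat list"
  assumes "ns \<noteq> []"
    and "\<forall>n\<in>set ns. n \<ge> 2 \<and> even n"
    and "u \<in> prodK_verts ns"
  shows "laplacian_pst (blowup2_verts (prodK_verts ns)) (blowup2_adj (prodK_adj ns)) (0, u) (1, u)"
proof -
  have pos: "\<forall>n\<in>set ns. 0 < n"
    using assms(2) by auto
  show ?thesis
  proof (rule blowup2_laplacian_pst_odd_eigenvalues)
    show "finite (prodK_verts ns)" "finite (Pow {..<length ns})"
      by (simp_all add: finite_prodK_verts)
    show "card {w \<in> prodK_verts ns. prodK_adj ns v w} = (\<Prod>j<length ns. ns ! j - 1)"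
      if "v \<in> prodK_verts ns" for v
      using card_prodK_neighbours[OF pos that] .
    show "mat_vec (prodK_verts ns) (adjacency (prodK_adj ns)) (prodK_eigvec ns u S) v
        = of_int (prodK_eigval ns S) * prodK_eigvec ns u S v" if "v \<in> prodK_verts ns" for S v
      using prodK_eigvec_eigen[OF pos assms(3) that] .
    show "odd (prodK_eigval ns S)" for S
      using odd_prodK_eigval assms(2) by auto
    show "(\<Sum>S\<in>Pow {..<length ns}. prodK_eigvec ns u S v) = unit_vec u v" if "v \<in> prodK_verts ns" for v
      using sum_prodK_eigvec[OF assms(3) that] .
  qed
qed

end
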